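(* Let $(\mathcal{X},S_0)$ be a rational elliptic surface with section whose singular fibres are exactly six fibres of type $I_2$. Consider its double cover representation $g:Z\to\mathbb{F}_2$, branched over the $(-2)$-section $B$ and a trisection $T\in|3B+6F|$. Then $T$ splits as $T=T_1+T_2+T_3$ into three distinct sections $T_1,T_2,T_3$, each of self-intersection $2$ and each a member of $|B+2F|$; any two of them meet in two distinct points, and the three do not all pass through a common point, so that $T$ has six nodes.
   Context: A rational elliptic surface with section is a pair $(\mathcal{X},S_0)$ with $\mathcal{X}$ a smooth rational complex projective surface with a relatively minimal genus-one fibration $f:\mathcal{X}\to\mathbb{P}^1$ and $S_0$ a section. A fibre of type $I_2$ consists of two smooth rational curves meeting transversally at two points. Double cover representation: $\mathbb{F}_2=\mathbb{P}(\mathcal{O}_{\mathbb{P}^1}\oplus\mathcal{O}_{\mathbb{P}^1}(2))$ with $B$ its negative section ($B^2=-2$) and $F$ the fibre class. Writing the Weierstrass model of $(\mathcal{X},S_0)$ as $y^2=x^3+A(t)x+B(t)$ with $\deg A\le 4$, $\deg B\le 6$, the curve $T=\{x^3+A(t)x+B(t)=0\}$ is a trisection in $|3B+6F|$ disjoint from $B$, $Z$ is the double cover of $\mathbb{F}_2$ branched along $B+T$, $\mathcal{X}$ is the minimal resolution of $Z$, the fibration is pulled back from the ruling of $\mathbb{F}_2$, and $S_0$ is the preimage of $B$. *)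

theory Defs
  imports "HOL-Computational_Algebra.Polynomial" "HOL-Library.Extended_Nat" Complex_Main
begin

text \<open>Points of the base curve P^1: Some t is the affine point t, None is the point at infinity.
  A polynomial p of degree at most d in the affine coordinate t is read as a binary form of
  degree d (a section of O(d) on P^1); its vanishing order at infinity is d - degree p.\<close>

definition ordP :: "nat \<Rightarrow> complex poly \<Rightarrow> complex option \<Rightarrow> enat" where
  "ordP d p pt = (if p = 0 then \<infinity> else
     (case pt of Some t \<Rightarrow> enat (order t p) | None \<Rightarrow> enat (d - degree p)))"

text \<open>Discriminant of the Weierstrass model y^2 = x^3 + A(t) x + B(t), a form of degree 12.\<close>
definition wdisc :: "complex poly \<Rightarrow> complex poly \<Rightarrow> complex poly" where
  "wdisc A B = smult 4 (A ^ 3) + smult 27 (B ^ 2)"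

definition singular_fibre :: "complex poly \<Rightarrow> complex poly \<Rightarrow> complex option \<Rightarrow> bool" where
  "singular_fibre A B pt \<longleftrightarrow> ordP 12 (wdisc A B) pt > 0"

text \<open>Kodaira type I_2 (Tate's algorithm): ord A = ord B = 0 and ord Delta = 2.\<close>
definition fibre_I2 :: "complex poly \<Rightarrow> complex poly \<Rightarrow> complex option \<Rightarrow> bool" where
  "fibre_I2 A B pt \<longleftrightarrow> ordP 4 A pt = 0 \<and> ordP 6 B pt = 0 \<and> ordP 12 (wdisc A B) pt = 2"

text \<open>Intersection points (on the base P^1) of the sections x = a(t) and x = b(t) of F_2,
  a, b sections of O(2), i.e. members of |B + 2F|.\<close>
definition meet_points :: "complex poly \<Rightarrow> complex poly \<Rightarrow> complex option set" where
  "meet_points a b = {pt. ordP 2 (a - b) pt > 0}"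

end

theory Submission
  imports Defs "HOL-Computational_Algebra.Fundamental_Theorem_Algebra"
begin

text \<open>Since every singular fibre has type I_2, the discriminant 4A^3 + 27B^2 has only double zeros,
  so it is a square 27s^2, and B does not vanish where it does. The roots (s - B)/2 and -(s + B)/2
  of Cardano's resolvent z^2 + Bz - A^3/27 are therefore coprime with product -(A/3)^3, hence cubes
  u^3 and v^3 with uv = -A/3. Cardano's formula splits x^3 + Ax + B into the three sections u + v,
  \<omega>u + \<omega>^2v and \<omega>^2u + \<omega>v, and the discriminant becomes minus the square of the sextic form R
  given by the product of their differences. The six singular fibres are thus six simple zeros of R
  on P^1; since each of the three quadratic factors of R has at most two zeros, each has exactly two
  and no two of them share a zero.\<close>

lemma order_power: "p \<noteq> 0 \<Longrightarrow> order a (p ^ n) = n * order a p"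
  by (induction n) (simp_all add: order_mult order_1_eq_0)

lemma complex_poly_power_if_dvd_order:
  fixes p :: "complex poly"
  assumes "k > 0" and dvd: "\<And>z. k dvd order z p"
  obtains q where "p = q ^ k"
proof -
  obtain c where c: "c ^ k = lead_coeff p"
    using nth_root_exists[OF \<open>k > 0\<close>] by blast
  define m where "m z = order z p div k" for z
  have order_eq: "order z p = m z * k" for z
    using dvd[of z] by (simp add: m_def)
  have "p = smult (lead_coeff p) (\<Prod>z | poly p z = 0. [:-z, 1:] ^ order z p)"
    by (rule complex_poly_decompose[symmetric])
  also have "\<dots> = smult (c ^ k) ((\<Prod>z | poly p z = 0. [:-z, 1:] ^ m z) ^ k)"
    by (simp add: c order_eq power_mult prod_power_distrib)
  also have "\<dots> = (smult c (\<Prod>z | poly p z = 0. [:-z, 1:] ^ m z)) ^ k"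
    by (simp add: smult_power)
  finally show ?thesis
    by (rule that)
qed

lemma complex_poly_power_if_coprime_factor:
  fixes P Q A :: "complex poly"
  assumes prod: "P * Q = smult c (A ^ k)" and "c \<noteq> 0" "k > 0"
    and coprime: "\<And>a. poly P a = 0 \<Longrightarrow> poly Q a \<noteq> 0"
  obtains w where "P = w ^ k"
proof (cases "P = 0")
  case True
  then show ?thesis
    using that[of 0] \<open>k > 0\<close> by simp
next
  case False
  have "k dvd order z P" for z
  proof (cases "poly P z = 0")
    case True
    then have "poly Q z \<noteq> 0"
      using coprime by blast
    then have "P * Q \<noteq> 0" "order z Q = 0"
      using \<open>P \<noteq> 0\<close> by (auto simp: order_0I)
    then have "order z P = order z (P * Q)"
      by (simp add: order_mult)
    also have "\<dots> = k * order z A"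
      using prod \<open>P * Q \<noteq> 0\<close> \<open>c \<noteq> 0\<close> by (auto simp: order_smult order_power)
    finally show ?thesis
      by simp
  qed (simp add: order_0I)
  then show ?thesis
    using complex_poly_power_if_dvd_order \<open>k > 0\<close> that by blast
qed

lemma complex_cube_root_of_unity_exists: "\<exists>\<omega>::complex. \<omega>^2 + \<omega> + 1 = 0"
proof
  have "complex_of_real (sqrt 3) ^ 2 = 3"
    by (simp flip: of_real_power)
  then show "((-1 + \<i> * sqrt 3) / 2)^2 + (-1 + \<i> * sqrt 3) / 2 + 1 = 0"
    by (simp add: power2_eq_square field_simps)
qed

lemma cube_eq_cube_cases:
  fixes x y \<omega> :: "'a::idom"
  assumes "\<omega>^2 + \<omega> + 1 = 0" "x^3 = y^3"
  shows "x = y \<or> x = \<omega> * y \<or> x = \<omega>^2 * y"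
proof -
  have "(x - y) * (x - \<omega> * y) * (x - \<omega>^2 * y) = x^3 - y^3"
    using assms(1) by algebra
  then show ?thesis
    using assms(2) by simp
qed

lemma cube_root_rescale:
  fixes u v y \<omega> :: "'a::idom"
  assumes \<omega>: "\<omega>^2 + \<omega> + 1 = 0" and "(u * v)^3 = y^3"
  obtains v' where "v'^3 = v^3" "u * v' = y"
proof -
  from cube_eq_cube_cases[OF \<omega>, of y "u * v"] assms(2)
  consider "y = u * v" | "y = u * (\<omega> * v)" | "y = u * (\<omega>^2 * v)"
    by (auto simp: ac_simps)
  then show ?thesis
  proof cases
    case 1
    then show ?thesis using that by blast
  next
    case 2
    moreover have "(\<omega> * v)^3 = v^3"
      using \<omega> by algebra
    ultimately show ?thesis using that by blast
  next
    case 3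
    moreover have "(\<omega>^2 * v)^3 = v^3"
      using \<omega> by algebra
    ultimately show ?thesis using that by blast
  qed
qed

lemma cardano_factorization:
  fixes \<omega> u v a b x :: "'a::idom"
  assumes "\<omega>^2 + \<omega> + 1 = 0" "a = - 3 * u * v" "b = - (u^3 + v^3)"
  shows "x^3 + a * x + b
    = (x - (u + v)) * (x - (\<omega> * u + \<omega>^2 * v)) * (x - (\<omega>^2 * u + \<omega> * v))"
  using assms by algebra

lemma cardano_discriminant:
  fixes \<omega> u v a b :: "'a::idom"
  assumes "\<omega>^2 + \<omega> + 1 = 0" "a = - 3 * u * v" "b = - (u^3 + v^3)"
  shows "4 * a^3 + 27 * b^2
    = - ((((u + v) - (\<omega> * u + \<omega>^2 * v)) * ((u + v) - (\<omega>^2 * u + \<omega> * v))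
          * ((\<omega> * u + \<omega>^2 * v) - (\<omega>^2 * u + \<omega> * v)))^2)"
  using assms by algebra

lemma cardano_degree_le:
  fixes u v :: "'a::idom poly"
  assumes "degree (u * v) \<le> 2 * n" "degree (u^3 + v^3) \<le> 3 * n"
  shows "degree u \<le> n"
proof (rule ccontr)
  assume "\<not> degree u \<le> n"
  then have "u \<noteq> 0"
    by auto
  have "degree (v^3) < degree (u^3)"
  proof (cases "v = 0")
    case False
    then have "degree v < n"
      using assms(1) \<open>u \<noteq> 0\<close> \<open>\<not> degree u \<le> n\<close> by (simp add: degree_mult_eq)
    then show ?thesis
      using \<open>u \<noteq> 0\<close> \<open>\<not> degree u \<le> n\<close> False by (simp add: degree_power_eq)
  qed (use \<open>\<not> degree u \<le> n\<close> \<open>u \<noteq> 0\<close> in \<open>simp add: degree_power_eq\<close>)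
  then have "degree (u^3 + v^3) = 3 * degree u"
    using \<open>u \<noteq> 0\<close> by (simp add: degree_add_eq_left degree_power_eq)
  then show False
    using assms(2) \<open>\<not> degree u \<le> n\<close> by simp
qed

lemma ordP_smult: "c \<noteq> 0 \<Longrightarrow> ordP d (smult c p) pt = ordP d p pt"
  by (simp add: ordP_def order_smult split: option.split)

lemma ordP_mult:
  assumes "degree p \<le> d" "degree q \<le> e"
  shows "ordP (d + e) (p * q) pt = ordP d p pt + ordP e q pt"
proof (cases "p = 0 \<or> q = 0")
  case False
  then show ?thesis
    using assms by (auto simp: ordP_def order_mult degree_mult_eq split: option.split)
qed (auto simp: ordP_def)

lemma ordP_Some_eq_0_iff [simp]: "ordP d p (Some a) = 0 \<longleftrightarrow> poly p a \<noteq> 0"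
  by (auto simp: ordP_def order_root enat_0_iff)

lemma ordP_None_eq_0_iff [simp]: "ordP d p None = 0 \<longleftrightarrow> p \<noteq> 0 \<and> d \<le> degree p"
  by (auto simp: ordP_def enat_0_iff)

lemma ordP_zeros_eq:
  "{pt. ordP d p pt > 0} = Some ` {a. poly p a = 0} \<union> (if p = 0 \<or> degree p < d then {None} else {})"
proof (rule set_eqI)
  show "pt \<in> {pt. ordP d p pt > 0} \<longleftrightarrow>
      pt \<in> Some ` {a. poly p a = 0} \<union> (if p = 0 \<or> degree p < d then {None} else {})" for pt
    by (cases pt) auto
qed

lemma finite_ordP_zeros: "p \<noteq> 0 \<Longrightarrow> finite {pt. ordP d p pt > 0}"
  unfolding ordP_zeros_eq by (simp add: poly_roots_finite)

lemma card_ordP_zeros_le: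
  assumes "p \<noteq> 0" "degree p \<le> d"
  shows "card {pt. ordP d p pt > 0} \<le> d"
proof -
  have fin: "finite {a. poly p a = 0}"
    using assms(1) poly_roots_finite by blast
  let ?infinity = "if p = 0 \<or> degree p < d then {None :: complex option} else {}"
  have "card {pt. ordP d p pt > 0} \<le> card (Some ` {a. poly p a = 0}) + card ?infinity"
    unfolding ordP_zeros_eq by (fact card_Un_le)
  also have "\<dots> \<le> degree p + (if degree p < d then 1 else 0)"
    using card_image_le[OF fin, of Some] card_poly_roots_bound[OF assms(1)] assms(1) by simp
  finally show ?thesis
    using assms(2) by (auto split: if_splits)
qed

lemma ordP_zeros_of_three_quadratics:
  fixes p q r :: "complex poly"
  assumes nz: "p \<noteq> 0" "q \<noteq> 0" "r \<noteq> 0"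
    and deg: "degree p \<le> 2" "degree q \<le> 2" "degree r \<le> 2"
    and simple: "\<And>pt. ordP 6 (p * q * r) pt \<le> 1"
    and six: "card {pt. ordP 6 (p * q * r) pt > 0} = 6"
  defines "Z f \<equiv> {pt. ordP 2 f pt > 0}"
  shows "card (Z p) = 2 \<and> card (Z q) = 2 \<and> card (Z r) = 2
    \<and> Z p \<inter> Z q = {} \<and> Z p \<inter> Z r = {} \<and> Z q \<inter> Z r = {}
    \<and> card (Z p \<union> Z q \<union> Z r) = 6"
proof -
  have "degree (p * q) \<le> 4"
    using deg degree_mult_le[of p q] by linarith
  then have ord: "ordP 6 (p * q * r) pt = ordP 2 p pt + ordP 2 q pt + ordP 2 r pt" for pt
    using ordP_mult[OF _ deg(3), of "p * q" 4] ordP_mult[OF deg(1,2)] by simp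
  have at_most_one_pos: "\<not> (0 < x \<and> 0 < y) \<and> \<not> (0 < x \<and> 0 < z) \<and> \<not> (0 < y \<and> 0 < z)"
    if "x + y + z \<le> (1::enat)" for x y z
    using that by (cases x; cases y; cases z) (auto simp: one_enat_def zero_enat_def)
  have "Z p \<inter> Z q = {} \<and> Z p \<inter> Z r = {} \<and> Z q \<inter> Z r = {}"
    using at_most_one_pos[OF simple[unfolded ord]] unfolding Z_def by blast
  then have disj: "Z p \<inter> Z q = {}" "Z p \<inter> Z r = {}" "Z q \<inter> Z r = {}"
    by auto
  have union: "{pt. ordP 6 (p * q * r) pt > 0} = Z p \<union> Z q \<union> Z r"
    unfolding ord Z_def by auto
  have fin: "finite (Z p)" "finite (Z q)" "finite (Z r)"
    and le: "card (Z p) \<le> 2" "card (Z q) \<le> 2" "card (Z r) \<le> 2"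
    using finite_ordP_zeros card_ordP_zeros_le nz deg unfolding Z_def by blast+
  have "card (Z p) + card (Z q) + card (Z r) = 6"
    using six union fin disj by (simp add: card_Un_disjoint Int_Un_distrib2)
  then have "card (Z p) = 2" "card (Z q) = 2" "card (Z r) = 2"
    using le by linarith+
  then show ?thesis
    using disj six union by simp
qed

lemma wdisc_nonzero:
  assumes "card {pt. singular_fibre A B pt} \<noteq> 0"
  shows "wdisc A B \<noteq> 0"
proof
  assume "wdisc A B = 0"
  then have "{pt. singular_fibre A B pt} = UNIV"
    by (simp add: singular_fibre_def ordP_def)
  then show False
    using assms by (simp add: infinite_UNIV_char_0)
qed

lemma singular_fibre_Some_iff: "singular_fibre A B (Some a) \<longleftrightarrow> poly (wdisc A B) a = 0"
  by (simp add: singular_fibre_def)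

lemma fibre_I2_Some:
  assumes "fibre_I2 A B (Some a)"
  shows "order a (wdisc A B) = 2" "poly B a \<noteq> 0"
  using assms
  by (auto simp: fibre_I2_def ordP_def numeral_eq_enat enat_0_iff order_root split: if_splits)

lemma wdisc_square_cardano_split:
  fixes A B q :: "complex poly"
  assumes square: "wdisc A B = q^2"
    and coprime: "\<And>a. poly (wdisc A B) a = 0 \<Longrightarrow> poly B a \<noteq> 0"
  obtains u v where "A = - smult 3 (u * v)" "B = - (u^3 + v^3)"
proof -
  obtain \<kappa> :: complex where \<kappa>: "\<kappa>^2 = 1/27"
    using nth_root_exists[of 2 "1/27 :: complex"] by auto
  define s where "s = smult \<kappa> q"
  have s: "27 * poly s t ^ 2 = poly (wdisc A B) t" for t
    using \<kappa> by (simp add: s_def square power_mult_distrib field_simps)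
  define P where "P = smult (1/2) (s - B)"
  define Q where "Q = smult (-1/2) (s + B)"
  have sum: "P + Q = - B"
    by (simp add: P_def Q_def fun_eq_iff algebra_simps flip: poly_eq_poly_eq_iff)
  have "poly (P * Q) t = poly (smult (-1/27) (A^3)) t" for t
    using s[of t] by (simp add: P_def Q_def wdisc_def) (simp add: field_simps power2_eq_square)
  then have prod: "P * Q = smult (-1/27) (A^3)"
    by (simp add: poly_eq_poly_eq_iff[symmetric] fun_eq_iff)
  have PQ_coprime: "poly Q a \<noteq> 0" if "poly P a = 0" for a
  proof
    assume "poly Q a = 0"
    then have "poly B a = 0" "poly s a = 0"
      using that arg_cong[OF sum, of "\<lambda>p. poly p a"] by (auto simp: P_def)
    then show False
      using coprime[of a] s[of a] by simp
  qed
  obtain u where u: "P = u^3"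
    using complex_poly_power_if_coprime_factor[OF prod] PQ_coprime by auto
  obtain v0 where v0: "Q = v0^3"
    using complex_poly_power_if_coprime_factor[of Q P "-1/27" A 3] prod PQ_coprime
    by (auto simp: mult.commute)
  obtain \<omega> :: complex where \<omega>: "\<omega>^2 + \<omega> + 1 = 0"
    using complex_cube_root_of_unity_exists by blast
  have "[:\<omega>:]^2 + [:\<omega>:] + 1 = 0"
    using \<omega> by (simp add: fun_eq_iff flip: poly_eq_poly_eq_iff)
  moreover have "(u * v0)^3 = (smult (-1/3) A)^3"
    using prod by (simp add: u v0 power_mult_distrib smult_power power_divide)
  ultimately obtain v where v: "v^3 = v0^3" "u * v = smult (-1/3) A"
    using cube_root_rescale by blast
  show ?thesis
  proof (rule that)
    show "A = - smult 3 (u * v)"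
      using v(2) by simp
    show "B = - (u^3 + v^3)"
      using sum by (simp add: u v0 v(1))
  qed
qed

lemma I2_weierstrass_cardano_split:
  fixes A B :: "complex poly"
  assumes degA: "degree A \<le> 4" and degB: "degree B \<le> 6"
    and I2: "\<forall>pt. singular_fibre A B pt \<longrightarrow> fibre_I2 A B pt"
  obtains u v where "A = - smult 3 (u * v)" "B = - (u^3 + v^3)" "degree u \<le> 2" "degree v \<le> 2"
proof -
  have I2_affine: "order a (wdisc A B) = 2 \<and> poly B a \<noteq> 0" if "poly (wdisc A B) a = 0" for a
    using I2 fibre_I2_Some[of A B a] that by (auto simp: singular_fibre_Some_iff)
  then have "2 dvd order a (wdisc A B)" for a
    using order_0I[of "wdisc A B" a] by (cases "poly (wdisc A B) a = 0") auto
  then obtain q where "wdisc A B = q^2"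
    using complex_poly_power_if_dvd_order[of 2 "wdisc A B"] by auto
  then obtain u v where A: "A = - smult 3 (u * v)" and B: "B = - (u^3 + v^3)"
    using wdisc_square_cardano_split I2_affine by blast
  have "degree (u * v) \<le> 2 * 2" "degree (u^3 + v^3) \<le> 3 * 2"
    using degA degB unfolding A B degree_minus by simp_all
  then have "degree u \<le> 2" "degree v \<le> 2"
    using cardano_degree_le[of u v 2] cardano_degree_le[of v u 2] by (simp_all add: ac_simps)
  with A B that show ?thesis
    by blast
qed

lemma cardano_sections:
  fixes u v :: "complex poly" and \<omega> :: complex
  assumes \<omega>: "\<omega>^2 + \<omega> + 1 = 0"
    and A: "A = - smult 3 (u * v)" and B: "B = - (u^3 + v^3)"
  defines "T1 \<equiv> u + v" and "T2 \<equiv> smult \<omega> u + smult (\<omega>^2) v"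
    and "T3 \<equiv> smult (\<omega>^2) u + smult \<omega> v"
  shows "x^3 + poly A t * x + poly B t = (x - poly T1 t) * (x - poly T2 t) * (x - poly T3 t)"
    and "wdisc A B = - (((T1 - T2) * (T1 - T3) * (T2 - T3))^2)"
proof -
  show "x^3 + poly A t * x + poly B t = (x - poly T1 t) * (x - poly T2 t) * (x - poly T3 t)"
    unfolding T1_def T2_def T3_def poly_add poly_smult
    by (rule cardano_factorization[OF \<omega>]) (simp_all add: A B)
  have "poly (wdisc A B) t = poly (- (((T1 - T2) * (T1 - T3) * (T2 - T3))^2)) t" for t
    unfolding wdisc_def T1_def T2_def T3_def
      poly_add poly_smult poly_diff poly_mult poly_power poly_minus
    by (rule cardano_discriminant[OF \<omega>]) (simp_all add: A B)
  then show "wdisc A B = - (((T1 - T2) * (T1 - T3) * (T2 - T3))^2)"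
    by (simp add: fun_eq_iff flip: poly_eq_poly_eq_iff)
qed

lemma simple_zeros_if_wdisc_eq_neg_square:
  fixes A B R :: "complex poly"
  assumes disc: "wdisc A B = - (R^2)" and "degree R \<le> 6"
    and I2: "\<forall>pt. singular_fibre A B pt \<longrightarrow> fibre_I2 A B pt"
  shows "{pt. ordP 6 R pt > 0} = {pt. singular_fibre A B pt}" "ordP 6 R pt \<le> 1"
proof -
  have ord: "ordP 12 (wdisc A B) pt = ordP 6 R pt + ordP 6 R pt" for pt
    using ordP_mult[OF assms(2) assms(2), of pt] ordP_smult[of "-1" 12 "R * R" pt]
    by (simp add: disc power2_eq_square)
  show "{pt. ordP 6 R pt > 0} = {pt. singular_fibre A B pt}"
    by (simp add: singular_fibre_def ord)
  show "ordP 6 R pt \<le> 1"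
  proof (cases "singular_fibre A B pt")
    case True
    then have "ordP 6 R pt + ordP 6 R pt = 2"
      using I2 by (simp add: fibre_I2_def ord)
    then show ?thesis
      by (cases "ordP 6 R pt") (auto simp: one_enat_def numeral_eq_enat)
  next
    case False
    then show ?thesis
      by (simp add: singular_fibre_def ord)
  qed
qed

lemma meet_points_of_I2_sections:
  fixes A B T1 T2 T3 :: "complex poly"
  assumes deg: "degree T1 \<le> 2" "degree T2 \<le> 2" "degree T3 \<le> 2"
    and disc: "wdisc A B = - (((T1 - T2) * (T1 - T3) * (T2 - T3))^2)"
    and six: "card {pt. singular_fibre A B pt} = 6"
    and I2: "\<forall>pt. singular_fibre A B pt \<longrightarrow> fibre_I2 A B pt"
  shows "T1 \<noteq> T2 \<and> T1 \<noteq> T3 \<and> T2 \<noteq> T3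
    \<and> card (meet_points T1 T2) = 2 \<and> card (meet_points T1 T3) = 2
    \<and> card (meet_points T2 T3) = 2
    \<and> meet_points T1 T2 \<inter> meet_points T1 T3 \<inter> meet_points T2 T3 = {}
    \<and> card (meet_points T1 T2 \<union> meet_points T1 T3 \<union> meet_points T2 T3) = 6"
proof -
  define R where "R = (T1 - T2) * (T1 - T3) * (T2 - T3)"
  have deg_diff: "degree (T1 - T2) \<le> 2" "degree (T1 - T3) \<le> 2" "degree (T2 - T3) \<le> 2"
    using deg by (simp_all add: degree_diff_le)
  then have "degree R \<le> 6"
    using degree_mult_le[of "(T1 - T2) * (T1 - T3)" "T2 - T3"] degree_mult_le[of "T1 - T2" "T1 - T3"]
    unfolding R_def by linarith
  then have zeros_R: "{pt. ordP 6 R pt > 0} = {pt. singular_fibre A B pt}"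
    and simple: "\<And>pt. ordP 6 R pt \<le> 1"
    using simple_zeros_if_wdisc_eq_neg_square[OF disc[folded R_def]] I2 by blast+
  have "R \<noteq> 0"
    using disc wdisc_nonzero six by (auto simp: R_def)
  then have distinct: "T1 - T2 \<noteq> 0" "T1 - T3 \<noteq> 0" "T2 - T3 \<noteq> 0"
    by (auto simp: R_def)
  from ordP_zeros_of_three_quadratics[OF distinct deg_diff simple[unfolded R_def]]
  show ?thesis
    using zeros_R six distinct unfolding R_def meet_points_def by auto
qed

theorem proposition2p3:
  fixes A B :: "complex poly"
  assumes degA: "degree A \<le> 4" and degB: "degree B \<le> 6"
    and six: "card {pt. singular_fibre A B pt} = 6"
    and allI2: "\<forall>pt. singular_fibre A B pt \<longrightarrow> fibre_I2 A B pt"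
  shows "\<exists>T1 T2 T3 :: complex poly.
           degree T1 \<le> 2 \<and> degree T2 \<le> 2 \<and> degree T3 \<le> 2
         \<and> (\<forall>t x. x ^ 3 + poly A t * x + poly B t
                    = (x - poly T1 t) * (x - poly T2 t) * (x - poly T3 t))
         \<and> T1 \<noteq> T2 \<and> T1 \<noteq> T3 \<and> T2 \<noteq> T3
         \<and> card (meet_points T1 T2) = 2 \<and> card (meet_points T1 T3) = 2
         \<and> card (meet_points T2 T3) = 2
         \<and> meet_points T1 T2 \<inter> meet_points T1 T3 \<inter> meet_points T2 T3 = {}
         \<and> card (meet_points T1 T2 \<union> meet_points T1 T3 \<union> meet_points T2 T3) = 6"
proof -
  obtain u v where A: "A = - smult 3 (u * v)" and B: "B = - (u^3 + v^3)"
    and deg_uv: "degree u \<le> 2" "degree v \<le> 2"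
    using I2_weierstrass_cardano_split[OF degA degB allI2] by blast
  obtain \<omega> :: complex where \<omega>: "\<omega>^2 + \<omega> + 1 = 0"
    using complex_cube_root_of_unity_exists by blast
  define T1 where "T1 = u + v"
  define T2 where "T2 = smult \<omega> u + smult (\<omega>^2) v"
  define T3 where "T3 = smult (\<omega>^2) u + smult \<omega> v"
  have deg: "degree T1 \<le> 2" "degree T2 \<le> 2" "degree T3 \<le> 2"
    using deg_uv unfolding T1_def T2_def T3_def
    by (auto intro!: degree_add_le order.trans[OF degree_smult_le])
  note sections = cardano_sections[OF \<omega> A B, folded T1_def T2_def T3_def]
  show ?thesis
    using deg sections(1) meet_points_of_I2_sections[OF deg sections(2) six allI2]
    by (intro exI[of _ T1] exI[of _ T2] exI[of _ T3]) auto
qed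

end
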